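(* Let $w:\mathbb{R}^n\to\mathbb{R}$ be continuous and bounded from below, and suppose that for some $c>0$ it satisfies $Lw\ge -cw$ in the viscosity sense in $\{w<0\}$. Then $w\ge0$ in $\mathbb{R}^n$.
   Context: Let $n\ge2$, $s\in(0,1)$. $Lu(x)=\int_{\mathbb{R}^n}(u(x)-u(x+y))\frac{\mu(y/|y|)}{|y|^{n+s}}dy$ with $\mu:S^{n-1}\to\mathbb{R}$ measurable, $\mu(z)=\mu(-z)$ and $0<\lambda\le\mu\le\Lambda<\infty$. *)

theory Defs
  imports "HOL-Analysis.Analysis"
begin

definition kernel :: "(real^'n \<Rightarrow> real) \<Rightarrow> real \<Rightarrow> real^'n \<Rightarrow> real" where
  "kernel \<mu> s y = \<mu> (y /\<^sub>R norm y) / (norm y powr (real CARD('n) + s))"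

text \<open>The nonlocal operator
  L v (x) = PV int (v x - v (x+y)) mu(y/|y|)/|y|^(n+s) dy,
  written (using the evenness of mu) in the usual symmetrised form
  1/2 int (2 v x - v (x+y) - v (x-y)) K(y) dy, with values in the extended reals
  (positive part minus negative part of the integral).\<close>
definition Lop :: "(real^'n \<Rightarrow> real) \<Rightarrow> real \<Rightarrow> (real^'n \<Rightarrow> real) \<Rightarrow> real^'n \<Rightarrow> ereal" where
  "Lop \<mu> s v x =
     (let g = (\<lambda>y. (2 * v x - v (x + y) - v (x - y)) / 2 * kernel \<mu> s y)
      in enn2ereal (\<integral>\<^sup>+ y. ennreal (g y) \<partial>lborel)
         - enn2ereal (\<integral>\<^sup>+ y. ennreal (- g y) \<partial>lborel))"

definition C2_on :: "((real,'n::finite) vec \<Rightarrow> real) \<Rightarrow> ((real,'n::finite) vec) set \<Rightarrow> bool" where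
  "C2_on f S \<longleftrightarrow>
     (\<exists>(f' :: (real,'n::finite) vec \<Rightarrow> (((real,'n::finite) vec) \<Rightarrow>\<^sub>L real))
        (f'' :: (real,'n::finite) vec \<Rightarrow> ((real,'n::finite) vec \<Rightarrow>\<^sub>L (((real,'n::finite) vec) \<Rightarrow>\<^sub>L real))).
        (\<forall>x\<in>S. (f has_derivative blinfun_apply (f' x)) (at x)) \<and>
        (\<forall>x\<in>S. (f' has_derivative blinfun_apply (f'' x)) (at x)) \<and>
        continuous_on S f'')"

definition visc_super :: "(real^'n \<Rightarrow> real) \<Rightarrow> real \<Rightarrow> (real^'n \<Rightarrow> real)
    \<Rightarrow> (real^'n \<Rightarrow> real) \<Rightarrow> (real^'n) set \<Rightarrow> bool" where
  "visc_super \<mu> s w f \<Omega> \<longleftrightarrow>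
     (\<forall>x0\<in>\<Omega>. \<forall>N \<phi>. open N \<and> x0 \<in> N \<and> N \<subseteq> \<Omega> \<and> C2_on \<phi> N \<and>
        \<phi> x0 = w x0 \<and> (\<forall>x\<in>N - {x0}. \<phi> x < w x) \<longrightarrow>
        Lop \<mu> s (\<lambda>x. if x \<in> N then \<phi> x else w x) x0 \<ge> ereal (f x0))"

end

theory Submission
  imports Defs
begin

text \<open>If \<open>w\<close> took negative values, perturb it by a small paraboloid \<open>\<delta> |x - x\<^sub>1|\<^sup>2\<close> around a
  point where \<open>w\<close> is \<open>\<delta>\<close>-close to its infimum \<open>m < 0\<close>; the perturbed function attains its minimum
  at some \<open>x\<^sub>0\<close>, so a concave paraboloid touches \<open>w\<close> from below at \<open>x\<^sub>0\<close>. For the resulting test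
  function the second difference is at most \<open>4\<delta> min(|y|\<^sup>2, 1)\<close>, because of the paraboloid near
  \<open>x\<^sub>0\<close> and because all values lie within \<open>2\<delta>\<close> of the infimum. As \<open>min(|y|\<^sup>2, 1) |y|\<^sup>-\<^sup>n\<^sup>-\<^sup>s\<close> is
  integrable, the operator at \<open>x\<^sub>0\<close> is \<open>O(\<delta>)\<close>, whereas the supersolution property forces it to be
  at least \<open>-c w(x\<^sub>0) > -c m / 2 > 0\<close>.\<close>

definition trunc_kernel :: "real \<Rightarrow> 'a::euclidean_space \<Rightarrow> real" where
  "trunc_kernel s y = min ((norm y)\<^sup>2) 1 * norm y powr (-(real DIM('a) + s))"

lemma powr_neg_le_dyadic:
  fixes r d s :: real
  assumes "1 \<le> r" "0 \<le> d + s"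
  obtains k :: nat where "r powr (-(d + s)) \<le> 2 powr (-(real k * (d + s)))" "r < 2 powr (real k + 1)"
proof
  define k where "k = nat \<lfloor>log 2 r\<rfloor>"
  have k: "real k = \<lfloor>log 2 r\<rfloor>"
    using assms by (simp add: k_def)
  have bounds: "2 powr real k \<le> r" "r < 2 powr (real k + 1)"
    using floor_log_eq_powr_iff[of r 2 "\<lfloor>log 2 r\<rfloor>"] assms k by simp_all
  have "r powr (-(d + s)) \<le> (2 powr real k) powr (-(d + s))"
    using bounds assms by (intro powr_mono2') auto
  also have "\<dots> = 2 powr (-(real k * (d + s)))"
    by (simp add: powr_powr algebra_simps)
  finally show "r powr (-(d + s)) \<le> 2 powr (-(real k * (d + s)))" .
  show "r < 2 powr (real k + 1)" by (fact bounds)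
qed

lemma powr_pos_le_dyadic:
  fixes r d s :: real
  assumes "0 < r" "r < 1" "2 \<le> d + s"
  obtains k :: nat where "r\<^sup>2 * r powr (-(d + s)) \<le> 2 powr ((real k + 1) * (d + s - 2))"
    "r < 2 powr (1 - real k)"
proof
  define j where "j = \<lfloor>log 2 r\<rfloor>"
  define k where "k = nat (- j - 1)"
  have "j \<le> -1"
    using assms unfolding j_def by (simp add: floor_le_iff)
  then have k: "real k = - real_of_int j - 1"
    by (simp add: k_def)
  have bounds: "2 powr j \<le> r" "r < 2 powr (j + 1)"
    using floor_log_eq_powr_iff[of r 2 j] assms j_def by simp_all
  have "r\<^sup>2 * r powr (-(d + s)) = r powr 2 * r powr (-(d + s))"
    using assms by (simp add: powr_realpow)
  also have "\<dots> = r powr (2 - d - s)"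
    unfolding powr_add[symmetric] by (simp add: algebra_simps)
  also have "\<dots> \<le> (2 powr j) powr (2 - d - s)"
    using bounds assms by (intro powr_mono2') auto
  also have "\<dots> = 2 powr ((real k + 1) * (d + s - 2))"
    using k by (simp add: powr_powr algebra_simps)
  finally show "r\<^sup>2 * r powr (-(d + s)) \<le> 2 powr ((real k + 1) * (d + s - 2))" .
  have "r < 2 powr (- real k)"
    using bounds k by (simp add: add.commute)
  also have "\<dots> \<le> 2 powr (1 - real k)"
    by (intro powr_mono) auto
  finally show "r < 2 powr (1 - real k)" .
qed

lemma ennreal_le_suminf: "(f k :: ennreal) \<le> (\<Sum>i. f i)"
  using sum_le_suminf[of f "{k}"] by simp

text \<open>The kernel is covered by two families of balls: large dyadic balls for \<open>|y| \<ge> 1\<close>, where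
  \<open>|y|\<^sup>-\<^sup>n\<^sup>-\<^sup>s\<close> is small, and small dyadic balls for \<open>|y| < 1\<close>, where \<open>|y|\<^sup>2\<^sup>-\<^sup>n\<^sup>-\<^sup>s\<close> is
  controlled by the radius of the next smaller ball.\<close>
lemma trunc_kernel_le_dyadic_sum:
  fixes y :: "'a::euclidean_space"
  assumes "2 \<le> real DIM('a) + s"
  defines "d \<equiv> real DIM('a)"
  shows "ennreal (trunc_kernel s y)
     \<le> (\<Sum>k. ennreal (2 powr (-(real k * (d + s)))) * indicator (ball 0 (2 powr (real k + 1))) y)
      + (\<Sum>k. ennreal (2 powr ((real k + 1) * (d + s - 2))) * indicator (ball 0 (2 powr (1 - real k))) y)"
    (is "_ \<le> ?A + ?B")
proof (cases "y = 0")
  case True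
  then show ?thesis by (simp add: trunc_kernel_def)
next
  case False
  consider "1 \<le> norm y" | "norm y < 1" by linarith
  then show ?thesis
  proof cases
    case 1
    then obtain k :: nat where k: "norm y powr (-(d + s)) \<le> 2 powr (-(real k * (d + s)))"
      "norm y < 2 powr (real k + 1)"
      using powr_neg_le_dyadic[of "norm y" d s] 1 assms by (auto simp: d_def)
    have "trunc_kernel s y = norm y powr (-(d + s))"
      using 1 by (simp add: trunc_kernel_def d_def min_absorb2 one_le_power)
    with k have "ennreal (trunc_kernel s y)
        \<le> ennreal (2 powr (-(real k * (d + s)))) * indicator (ball 0 (2 powr (real k + 1))) y"
      by (simp add: ennreal_leI)
    also have "\<dots> \<le> ?A" by (rule ennreal_le_suminf)
    finally show ?thesis by (simp add: add_increasing2)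
  next
    case 2
    then obtain k :: nat where k: "(norm y)\<^sup>2 * norm y powr (-(d + s)) \<le> 2 powr ((real k + 1) * (d + s - 2))"
      "norm y < 2 powr (1 - real k)"
      using powr_pos_le_dyadic[of "norm y" d s] 2 False assms by (auto simp: d_def)
    have "trunc_kernel s y = (norm y)\<^sup>2 * norm y powr (-(d + s))"
      using 2 by (simp add: trunc_kernel_def d_def min_absorb1 power_le_one)
    with k have "ennreal (trunc_kernel s y)
        \<le> ennreal (2 powr ((real k + 1) * (d + s - 2))) * indicator (ball 0 (2 powr (1 - real k))) y"
      by (simp add: ennreal_leI)
    also have "\<dots> \<le> ?B" by (rule ennreal_le_suminf)
    finally show ?thesis by (simp add: add_increasing)
  qed
qed

lemma nn_integral_powr_indicator_ball:
  "(\<integral>\<^sup>+ y. ennreal (2 powr a) * indicator (ball (0::'a::euclidean_space) (2 powr b)) y \<partial>lborel)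
     = ennreal (unit_ball_vol (real DIM('a)) * 2 powr (a + real DIM('a) * b))"
proof -
  have "(2 powr b) ^ DIM('a) = (2::real) powr (real DIM('a) * b)"
    using powr_power[of 2 b "DIM('a)"] by (simp add: mult.commute)
  then have vol: "2 powr a * (unit_ball_vol (real DIM('a)) * (2 powr b) ^ DIM('a))
      = unit_ball_vol (real DIM('a)) * 2 powr (a + real DIM('a) * b)"
    by (simp add: powr_add)
  have "(\<integral>\<^sup>+ y. ennreal (2 powr a) * indicator (ball (0::'a) (2 powr b)) y \<partial>lborel)
      = ennreal (2 powr a) * emeasure lborel (ball (0::'a) (2 powr b))"
    by (rule nn_integral_cmult_indicator) simp
  also have "\<dots> = ennreal (2 powr a * (unit_ball_vol (real DIM('a)) * (2 powr b) ^ DIM('a)))"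
    by (simp add: emeasure_ball ennreal_mult)
  finally show ?thesis
    unfolding vol .
qed

lemma suminf_ennreal_powr_geometric_less_top:
  fixes C a q :: real
  assumes "0 \<le> C" "q < 0"
  shows "(\<Sum>k. ennreal (C * 2 powr (a + real k * q))) < \<infinity>"
proof -
  have "2 powr (a + real k * q) = 2 powr a * (2 powr q) ^ k" for k
    using powr_power[of 2 q k] by (simp add: powr_add mult.commute)
  moreover have "summable (\<lambda>k. C * (2 powr a * (2 powr q) ^ k))"
    using assms by (intro summable_mult summable_geometric) (auto simp: powr_less_one)
  ultimately show ?thesis
    using assms by (simp add: ennreal_suminf_neq_top top.not_eq_extremum)
qed

lemma nn_integral_trunc_kernel_less_top:
  assumes "0 < s" "s < 2" "2 \<le> DIM('a::euclidean_space)"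
  shows "(\<integral>\<^sup>+ y. ennreal (trunc_kernel s (y::'a)) \<partial>lborel) < \<infinity>"
proof -
  define d where "d = real DIM('a)"
  define V where "V = unit_ball_vol d"
  define A where "A = (\<lambda>(k::nat) (y::'a).
    ennreal (2 powr (-(real k * (d + s)))) * indicator (ball 0 (2 powr (real k + 1))) y)"
  define B where "B = (\<lambda>(k::nat) (y::'a).
    ennreal (2 powr ((real k + 1) * (d + s - 2))) * indicator (ball 0 (2 powr (1 - real k))) y)"
  have meas: "\<And>k. A k \<in> borel_measurable lborel" "\<And>k. B k \<in> borel_measurable lborel"
    unfolding A_def B_def
    by (intro borel_measurable_times_ennreal borel_measurable_const borel_measurable_indicator; simp)+
  have A: "(\<integral>\<^sup>+ y. A k y \<partial>lborel) = ennreal (V * 2 powr (d + real k * (- s)))" for k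
  proof -
    have "-(real k * (d + s)) + d * (real k + 1) = d + real k * (- s)"
      by (simp add: algebra_simps)
    then show ?thesis
      by (simp only: A_def nn_integral_powr_indicator_ball V_def d_def)
  qed
  have B: "(\<integral>\<^sup>+ y. B k y \<partial>lborel) = ennreal (V * 2 powr ((2 * d + s - 2) + real k * (s - 2)))" for k
  proof -
    have "(real k + 1) * (d + s - 2) + d * (1 - real k) = (2 * d + s - 2) + real k * (s - 2)"
      by (simp add: algebra_simps)
    then show ?thesis
      by (simp only: B_def nn_integral_powr_indicator_ball V_def d_def)
  qed
  have "V \<ge> 0"
    by (simp add: V_def d_def)
  then have sums: "(\<Sum>k. ennreal (V * 2 powr (d + real k * (- s)))) < \<infinity>"
    "(\<Sum>k. ennreal (V * 2 powr ((2 * d + s - 2) + real k * (s - 2)))) < \<infinity>"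
    by (rule suminf_ennreal_powr_geometric_less_top; use assms in simp)+
  have "(\<integral>\<^sup>+ y. ennreal (trunc_kernel s (y::'a)) \<partial>lborel) \<le> (\<integral>\<^sup>+ y. (\<Sum>k. A k y) + (\<Sum>k. B k y) \<partial>lborel)"
    unfolding A_def B_def d_def by (intro nn_integral_mono trunc_kernel_le_dyadic_sum) (use assms in auto)
  also have "\<dots> = (\<integral>\<^sup>+ y. (\<Sum>k. A k y) \<partial>lborel) + (\<integral>\<^sup>+ y. (\<Sum>k. B k y) \<partial>lborel)"
    using meas by (intro nn_integral_add) auto
  also have "\<dots> = (\<Sum>k. \<integral>\<^sup>+ y. A k y \<partial>lborel) + (\<Sum>k. \<integral>\<^sup>+ y. B k y \<partial>lborel)"
    using meas by (simp add: nn_integral_suminf)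
  also have "\<dots> < \<infinity>"
    unfolding A B using sums by simp
  finally show ?thesis .
qed

lemma borel_measurable_trunc_kernel [measurable]:
  "trunc_kernel s \<in> borel_measurable (borel :: 'a::euclidean_space measure)"
  unfolding trunc_kernel_def by measurable

lemma kernel_nonneg_le:
  fixes \<mu> :: "real^'n \<Rightarrow> real"
  assumes "\<And>z. z \<in> sphere 0 1 \<Longrightarrow> 0 \<le> \<mu> z \<and> \<mu> z \<le> Lam"
  shows "0 \<le> kernel \<mu> s y" "kernel \<mu> s y \<le> Lam * norm y powr (-(real CARD('n) + s))"
proof -
  have "kernel \<mu> s y = \<mu> (y /\<^sub>R norm y) * norm y powr (-(real CARD('n) + s))"
    by (simp only: kernel_def powr_minus divide_inverse)
  moreover have "0 \<le> \<mu> (y /\<^sub>R norm y) \<and> \<mu> (y /\<^sub>R norm y) \<le> Lam" if "y \<noteq> 0"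
    using assms that by simp
  ultimately show "0 \<le> kernel \<mu> s y" "kernel \<mu> s y \<le> Lam * norm y powr (-(real CARD('n) + s))"
    by (cases "y = 0"; simp add: mult_right_mono)+
qed

lemma Lop_le_of_second_difference_le:
  fixes \<mu> :: "real^'n \<Rightarrow> real" and v :: "real^'n \<Rightarrow> real"
  assumes \<mu>: "\<And>z. z \<in> sphere 0 1 \<Longrightarrow> 0 \<le> \<mu> z \<and> \<mu> z \<le> Lam"
    and "0 \<le> K" "0 \<le> Lam" "0 \<le> I"
    and I: "(\<integral>\<^sup>+ y. ennreal (trunc_kernel s (y::real^'n)) \<partial>lborel) = ennreal I"
    and second_diff: "\<And>y. 2 * v x - v (x + y) - v (x - y) \<le> 2 * K * min ((norm y)\<^sup>2) 1"
  shows "Lop \<mu> s v x \<le> ereal (K * Lam * I)"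
proof -
  define g where "g y = (2 * v x - v (x + y) - v (x - y)) / 2 * kernel \<mu> s y" for y
  have g_le: "g y \<le> (K * Lam) * trunc_kernel s y" for y
  proof -
    have "g y \<le> K * min ((norm y)\<^sup>2) 1 * kernel \<mu> s y"
      unfolding g_def using second_diff[of y] kernel_nonneg_le(1)[OF \<mu>]
      by (intro mult_right_mono) auto
    also have "\<dots> \<le> K * min ((norm y)\<^sup>2) 1 * (Lam * norm y powr (-(real CARD('n) + s)))"
      using kernel_nonneg_le(2)[OF \<mu>] \<open>0 \<le> K\<close> by (intro mult_left_mono) auto
    finally show ?thesis
      by (simp add: trunc_kernel_def mult_ac)
  qed
  have "(\<integral>\<^sup>+ y. ennreal (g y) \<partial>lborel) \<le> (\<integral>\<^sup>+ y. ennreal (K * Lam) * ennreal (trunc_kernel s (y::real^'n)) \<partial>lborel)"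
    by (intro nn_integral_mono) (use g_le assms in \<open>simp add: ennreal_mult'[symmetric] ennreal_leI\<close>)
  also have "\<dots> = ennreal (K * Lam * I)"
    using assms by (simp add: nn_integral_cmult ennreal_mult')
  finally have "(\<integral>\<^sup>+ y. ennreal (g y) \<partial>lborel) \<le> ennreal (K * Lam * I)" .
  then have "enn2ereal (\<integral>\<^sup>+ y. ennreal (g y) \<partial>lborel) \<le> ereal (K * Lam * I)"
    using assms by (simp add: less_eq_ennreal.rep_eq)
  moreover have "Lop \<mu> s v x \<le> enn2ereal (\<integral>\<^sup>+ y. ennreal (g y) \<partial>lborel)"
    unfolding Lop_def Let_def g_def by (rule ereal_diff_le_self) (simp add: enn2ereal_nonneg)
  ultimately show ?thesis
    by (rule order_trans[rotated])
qed

lemma second_difference_le: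
  fixes \<phi> v :: "'a::real_inner \<Rightarrow> real"
  assumes below: "\<And>x. \<phi> x \<le> v x" and touch: "v x0 = \<phi> x0"
    and paraboloid: "\<And>y. \<phi> (x0 + y) + \<phi> (x0 - y) - 2 * \<phi> x0 = - 2 * K * (y \<bullet> y)"
    and osc: "\<And>x. v x0 - K \<le> v x"
  shows "2 * v x0 - v (x0 + y) - v (x0 - y) \<le> 2 * K * min ((norm y)\<^sup>2) 1"
proof -
  have "0 \<le> K"
    using osc[of x0] by simp
  have "2 * v x0 - v (x0 + y) - v (x0 - y) \<le> 2 * K * (norm y)\<^sup>2"
    using paraboloid[of y] below[of "x0 + y"] below[of "x0 - y"] touch
    by (simp add: power2_norm_eq_inner)
  moreover have "2 * v x0 - v (x0 + y) - v (x0 - y) \<le> 2 * K"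
    using osc[of "x0 + y"] osc[of "x0 - y"] by simp
  ultimately show ?thesis
    using \<open>0 \<le> K\<close> by (simp add: min_def)
qed

lemma C2_on_quadratic:
  fixes p q :: "real^'n"
  shows "C2_on (\<lambda>x. c - a * ((x - p) \<bullet> (x - p)) - b * ((x - q) \<bullet> (x - q))) S"
proof -
  define f' where "f' x = blinfun_inner_left (- (2 * a) *\<^sub>R (x - p) - (2 * b) *\<^sub>R (x - q))"
    for x :: "real^'n"
  define f'' where "f'' = Blinfun (\<lambda>h::real^'n. blinfun_inner_left (- (2 * (a + b)) *\<^sub>R h))"
  have "bounded_linear (\<lambda>h::real^'n. blinfun_inner_left (- (2 * (a + b)) *\<^sub>R h))"
    by (intro bounded_linear_compose[OF bounded_linear_blinfun_inner_left]
        bounded_linear_scaleR_right bounded_linear_ident)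
  then have f'': "blinfun_apply f'' = (\<lambda>h. blinfun_inner_left (- (2 * (a + b)) *\<^sub>R h))"
    unfolding f''_def by (rule bounded_linear_Blinfun_apply)
  have "((\<lambda>x. c - a * ((x - p) \<bullet> (x - p)) - b * ((x - q) \<bullet> (x - q))) has_derivative f' x) (at x)" for x
    unfolding f'_def
    by (auto intro!: derivative_eq_intros simp: inner_commute algebra_simps inner_diff_right)
  moreover have "(f' has_derivative f'') (at x)" for x
  proof -
    have "((\<lambda>x. - (2 * a) *\<^sub>R (x - p) - (2 * b) *\<^sub>R (x - q)) has_derivative
        (\<lambda>h. - (2 * (a + b)) *\<^sub>R h)) (at x)"
      by (auto intro!: derivative_eq_intros simp: algebra_simps)
    from bounded_linear.has_derivative[OF bounded_linear_blinfun_inner_left this]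
    show ?thesis unfolding f'_def f'' .
  qed
  ultimately show ?thesis
    unfolding C2_on_def by (intro exI[of _ f'] exI[of _ "\<lambda>_. f''"]) auto
qed

lemma Lop_touching_test_function_le:
  fixes \<mu> w \<phi> :: "real^'n \<Rightarrow> real"
  assumes \<mu>: "\<And>z. z \<in> sphere 0 1 \<Longrightarrow> 0 \<le> \<mu> z \<and> \<mu> z \<le> Lam" and "0 \<le> Lam" "0 \<le> I"
    and I: "(\<integral>\<^sup>+ y. ennreal (trunc_kernel s (y::real^'n)) \<partial>lborel) = ennreal I"
    and m: "\<And>x. m \<le> w x" and "0 < \<delta>"
    and touch: "\<phi> x0 = w x0" "w x0 < m + \<delta>"
    and below: "\<And>x. \<phi> x + \<delta> * ((x - x0) \<bullet> (x - x0)) \<le> w x"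
    and paraboloid: "\<And>y. \<phi> (x0 + y) + \<phi> (x0 - y) - 2 * \<phi> x0 = - 4 * \<delta> * (y \<bullet> y)"
    and N: "\<And>x. x \<in> N \<Longrightarrow> m - \<delta> < \<phi> x"
  shows "Lop \<mu> s (\<lambda>x. if x \<in> N then \<phi> x else w x) x0 \<le> ereal (2 * \<delta> * Lam * I)"
proof -
  define v where "v = (\<lambda>x. if x \<in> N then \<phi> x else w x)"
  have second_diff: "2 * v x0 - v (x0 + y) - v (x0 - y) \<le> 2 * (2 * \<delta>) * min ((norm y)\<^sup>2) 1" for y
  proof (rule second_difference_le)
    show "\<phi> x \<le> v x" for x
    proof -
      have "0 \<le> \<delta> * ((x - x0) \<bullet> (x - x0))"
        using \<open>0 < \<delta>\<close> by simp
      with below[of x] show ?thesis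
        by (simp add: v_def)
    qed
    show "v x0 - 2 * \<delta> \<le> v x" for x
      using touch m[of x] N[of x] \<open>0 < \<delta>\<close> by (auto simp: v_def)
  qed (use touch paraboloid in \<open>simp_all add: v_def\<close>)
  have "Lop \<mu> s v x0 \<le> ereal (2 * \<delta> * Lam * I)"
    by (rule Lop_le_of_second_difference_le[OF \<mu> _ \<open>0 \<le> Lam\<close> \<open>0 \<le> I\<close> I second_diff])
      (use \<open>0 < \<delta>\<close> in auto)
  then show ?thesis
    by (simp only: v_def)
qed

lemma continuous_plus_paraboloid_attains_min:
  fixes w :: "'a::euclidean_space \<Rightarrow> real"
  assumes cont: "continuous_on UNIV w" and bdd: "bdd_below (range w)" and "0 < \<epsilon>"
  obtains x0 where "\<And>x. w x0 + \<epsilon> * ((x0 - x1) \<bullet> (x0 - x1)) \<le> w x + \<epsilon> * ((x - x1) \<bullet> (x - x1))"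
proof -
  define h where "h x = w x + \<epsilon> * ((x - x1) \<bullet> (x - x1))" for x
  define m where "m = Inf (range w)"
  have m: "m \<le> w x" for x
    unfolding m_def using bdd by (simp add: cInf_lower)
  define R where "R = sqrt ((w x1 - m) / \<epsilon>)"
  have "0 \<le> R"
    unfolding R_def using m[of x1] \<open>0 < \<epsilon>\<close> by simp
  have "continuous_on (cball x1 R) h"
    unfolding h_def by (intro continuous_intros continuous_on_subset[OF cont]) auto
  then obtain x0 where "x0 \<in> cball x1 R" and min_ball: "\<And>y. y \<in> cball x1 R \<Longrightarrow> h x0 \<le> h y"
    using continuous_attains_inf[of "cball x1 R" h] \<open>0 \<le> R\<close> by auto
  \<comment> \<open>outside the ball the paraboloid alone exceeds \<open>w x1 - m\<close>\<close>
  have "h x0 \<le> h y" for y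
  proof (cases "y \<in> cball x1 R")
    case False
    then have "R < norm (y - x1)"
      by (simp add: dist_norm norm_minus_commute)
    then have "R\<^sup>2 < (norm (y - x1))\<^sup>2"
      using \<open>0 \<le> R\<close> by (intro power_strict_mono) auto
    then have "R\<^sup>2 < (y - x1) \<bullet> (y - x1)"
      by (simp add: power2_norm_eq_inner)
    moreover have "R\<^sup>2 = (w x1 - m) / \<epsilon>"
      unfolding R_def using m[of x1] \<open>0 < \<epsilon>\<close> by simp
    ultimately have "h x1 \<le> h y"
      unfolding h_def using m[of y] \<open>0 < \<epsilon>\<close> by (simp add: field_simps)
    with min_ball[of x1] \<open>0 \<le> R\<close> show ?thesis by simp
  qed (use min_ball in simp)
  then show thesis
    using that unfolding h_def by blast
qed

lemma touching_paraboloid_near_infimum: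
  fixes w :: "real^'n \<Rightarrow> real"
  assumes cont: "continuous_on UNIV w" and bdd: "bdd_below (range w)" and "0 < \<delta>"
    and x1: "w x1 < Inf (range w) + \<delta>"
  obtains x0 \<phi> where "w x0 < Inf (range w) + \<delta>" "\<phi> x0 = w x0"
    "continuous_on UNIV \<phi>" "\<And>S. C2_on \<phi> S"
    "\<And>x. \<phi> x + \<delta> * ((x - x0) \<bullet> (x - x0)) \<le> w x"
    "\<And>y. \<phi> (x0 + y) + \<phi> (x0 - y) - 2 * \<phi> x0 = - 4 * \<delta> * (y \<bullet> y)"
proof -
  obtain x0 where x0: "\<And>x. w x0 + \<delta> * ((x0 - x1) \<bullet> (x0 - x1)) \<le> w x + \<delta> * ((x - x1) \<bullet> (x - x1))"
    using continuous_plus_paraboloid_attains_min[OF cont bdd \<open>0 < \<delta>\<close>] by blast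
  define \<phi> where "\<phi> = (\<lambda>x. w x0 + \<delta> * ((x0 - x1) \<bullet> (x0 - x1))
    - \<delta> * ((x - x1) \<bullet> (x - x1)) - \<delta> * ((x - x0) \<bullet> (x - x0)))"
  show thesis
  proof
    have "0 \<le> \<delta> * ((x0 - x1) \<bullet> (x0 - x1))"
      using \<open>0 < \<delta>\<close> by simp
    then have "w x0 \<le> w x1"
      using x0[of x1] by simp
    with x1 show "w x0 < Inf (range w) + \<delta>" by simp
    show "\<phi> x0 = w x0"
      by (simp add: \<phi>_def)
    show "\<phi> x + \<delta> * ((x - x0) \<bullet> (x - x0)) \<le> w x" for x
      using x0[of x] by (simp add: \<phi>_def)
    show "continuous_on UNIV \<phi>"
      unfolding \<phi>_def by (intro continuous_intros)
    show "C2_on \<phi> S" for S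
      unfolding \<phi>_def by (rule C2_on_quadratic)
    show "\<phi> (x0 + y) + \<phi> (x0 - y) - 2 * \<phi> x0 = - 4 * \<delta> * (y \<bullet> y)" for y
      unfolding \<phi>_def
      by (simp add: inner_add_left inner_add_right inner_diff_left inner_diff_right inner_commute algebra_simps)
  qed
qed

lemma obtain_pos_le_mult_le:
  fixes a b C :: real
  assumes "0 < a" "0 < b" "0 \<le> C"
  obtains \<delta> where "0 < \<delta>" "\<delta> \<le> a" "C * \<delta> \<le> b"
proof
  have "C * min a (b / (C + 1)) \<le> C * (b / (C + 1))"
    using assms by (intro mult_left_mono) auto
  also have "\<dots> \<le> b"
    using assms by (simp add: field_simps)
  finally show "C * min a (b / (C + 1)) \<le> b" .
qed (use assms in auto)

theorem lemma7p3:
  fixes \<mu> :: "real^'n \<Rightarrow> real" and w :: "real^'n \<Rightarrow> real"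
    and s lam Lam c :: real
  assumes n2: "CARD('n) \<ge> 2"
    and s: "0 < s" "s < 1"
    and mu_meas: "\<mu> \<in> borel_measurable (restrict_space borel (sphere 0 1))"
    and mu_even: "\<And>z. z \<in> sphere 0 1 \<Longrightarrow> \<mu> z = \<mu> (- z)"
    and mu_bounds: "0 < lam" "lam \<le> Lam" "\<And>z. z \<in> sphere 0 1 \<Longrightarrow> lam \<le> \<mu> z \<and> \<mu> z \<le> Lam"
    and w_cont: "continuous_on UNIV w"
    and w_bdd: "bdd_below (range w)"
    and c: "c > 0"
    and visc: "visc_super \<mu> s w (\<lambda>x. - c * w x) {x. w x < 0}"
  shows "\<forall>x. w x \<ge> 0"
proof (rule ccontr)
  assume "\<not> (\<forall>x. w x \<ge> 0)"
  define m where "m = Inf (range w)"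
  have m: "m \<le> w x" for x
    unfolding m_def using w_bdd by (simp add: cInf_lower)
  have "m < 0"
    using \<open>\<not> (\<forall>x. w x \<ge> 0)\<close> m by (meson le_less_trans not_le)
  have "(\<integral>\<^sup>+ y. ennreal (trunc_kernel s (y::real^'n)) \<partial>lborel) < \<infinity>"
    using nn_integral_trunc_kernel_less_top[where 'a="real^'n"] s n2 by simp
  then obtain I where I: "(\<integral>\<^sup>+ y. ennreal (trunc_kernel s (y::real^'n)) \<partial>lborel) = ennreal I" "0 \<le> I"
    by (cases "\<integral>\<^sup>+ y. ennreal (trunc_kernel s (y::real^'n)) \<partial>lborel") auto
  have \<mu>: "0 \<le> \<mu> z \<and> \<mu> z \<le> Lam" if "z \<in> sphere 0 1" for z
    using mu_bounds(1) mu_bounds(3)[OF that] by linarith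
  have "0 \<le> Lam * I"
    using mu_bounds I by simp
  obtain \<delta> where "0 < \<delta>" "\<delta> \<le> - m / 2" and \<delta>_small: "2 * Lam * I * \<delta> \<le> - c * m / 2"
    by (rule obtain_pos_le_mult_le[of "- m / 2" "- c * m / 2" "2 * Lam * I"])
      (use \<open>m < 0\<close> c \<open>0 \<le> Lam * I\<close> in \<open>auto simp: mult_less_0_iff mult.commute\<close>)
  obtain x1 where "w x1 < m + \<delta>"
    using cInf_less_iff[of "range w" "m + \<delta>"] w_bdd \<open>0 < \<delta>\<close> unfolding m_def by auto
  then obtain x0 \<phi> where x0: "w x0 < m + \<delta>" "\<phi> x0 = w x0"
    and \<phi>: "continuous_on UNIV \<phi>" "\<And>S. C2_on \<phi> S"
    and below: "\<And>x. \<phi> x + \<delta> * ((x - x0) \<bullet> (x - x0)) \<le> w x"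
    and paraboloid: "\<And>y. \<phi> (x0 + y) + \<phi> (x0 - y) - 2 * \<phi> x0 = - 4 * \<delta> * (y \<bullet> y)"
    using touching_paraboloid_near_infimum[OF w_cont w_bdd \<open>0 < \<delta>\<close>] unfolding m_def by metis
  have "w x0 < m / 2"
    using x0(1) \<open>\<delta> \<le> - m / 2\<close> by simp
  define N where "N = {x. w x < 0} \<inter> {x. m - \<delta> < \<phi> x}"
  define v where "v = (\<lambda>x. if x \<in> N then \<phi> x else w x)"
  have "x0 \<in> N"
    unfolding N_def using \<open>w x0 < m / 2\<close> \<open>m < 0\<close> \<open>0 < \<delta>\<close> x0(2) m[of x0] by simp
  moreover have "open N"
    unfolding N_def by (intro open_Int open_Collect_less w_cont \<phi>(1) continuous_on_const)
  moreover have "\<phi> x < w x" if "x \<noteq> x0" for x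
  proof -
    have "0 < \<delta> * ((x - x0) \<bullet> (x - x0))"
      using \<open>0 < \<delta>\<close> that by simp
    with below[of x] show ?thesis by simp
  qed
  moreover have "N \<subseteq> {x. w x < 0}"
    unfolding N_def by blast
  ultimately have "ereal (- c * w x0) \<le> Lop \<mu> s v x0"
    using visc \<phi>(2)[of N] x0(2) unfolding visc_super_def v_def by blast
  moreover have "Lop \<mu> s v x0 \<le> ereal (2 * \<delta> * Lam * I)"
    unfolding v_def
    by (rule Lop_touching_test_function_le[OF \<mu> _ \<open>0 \<le> I\<close> I(1) m \<open>0 < \<delta>\<close> x0(2,1) below paraboloid])
      (use mu_bounds in \<open>auto simp: N_def\<close>)
  moreover have "2 * \<delta> * Lam * I < - c * w x0"
  proof -
    have "- c * m / 2 < - c * w x0"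
      using \<open>w x0 < m / 2\<close> c by simp
    with \<delta>_small show ?thesis
      by (simp add: mult_ac)
  qed
  ultimately show False
    by (meson ereal_less_eq(3) not_le order_trans)
qed

end
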